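(* Let $\Sigma$ be a connected orientable compact surface with $n$ boundary components $\{1,\dots,n\}$, $T$ an ideal triangulation with edges $E$ and faces $F$, and $l^0\in\mathbb{R}_{>0}^{|E|}$ a hyperbolic metric on $(\Sigma,T)$. Consider the combinatorial Yamabe flow $$\frac{dw_i(t)}{dt}=B_i(t),\qquad w_i(0)=0,\qquad i=1,\dots,n,$$ where $B_i(t)$ is the length of boundary component $i$ of the hyperbolic metric determined by $w(t)$ via $\cosh\frac{l_{ij}}{2}=e^{w_i+w_j}\cosh\frac{l^0_{ij}}{2}$. Then this flow is the gradient flow of a concave function of $w$ (defined on the set $\mathcal{W}$ of $w$ for which all $l_{ij}>0$), and $\sum_{i=1}^n B_i(t)^2$ is decreasing in $t$.
   Context: An ideal triangulation: glue finitely many hexagons, each with three pairwise non-adjacent sides colored red, along red sides in pairs; faces are the images of hexagons, edges the images of red sides, boundary arcs the images of the other sides. Each edge joins boundary components $i,j$ and is denoted $ij$; each face meets boundary components $i,j,k$ and is denoted $ijk$. A hyperbolic metric is a vector $l\in\mathbb{R}_{>0}^{|E|}$; each face $ijk$ is realized as the unique hyperbolic right-angled hexagon with pairwise non-adjacent sides of lengths $l_{jk},l_{ki},l_{ij}$, and $\theta^i_{jk}$ is the length of the side on boundary component $i$ (opposite to $jk$). Then $B_i=\sum_{ijk\in F}\theta^i_{jk}$. *)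

theory Defs
  imports "HOL-Analysis.Analysis"
begin

text \<open>Boundary components are the elements of a finite type 'v (so n = CARD('v)).
  E is the (finite) set of edges, F the (finite) set of faces.
  ep e = (i,j) gives the two boundary components joined by edge e (i = j allowed).
  For a face f, its corners a in {0,1,2} lie on boundary components fv f a, and
  fe f a is the edge (red side) of f opposite to corner a, i.e. joining
  fv f ((a+1) mod 3) and fv f ((a+2) mod 3).\<close>

definition ideal_triangulation ::
  "'e set \<Rightarrow> 'f set \<Rightarrow> ('e \<Rightarrow> 'v \<times> 'v) \<Rightarrow> ('f \<Rightarrow> nat \<Rightarrow> 'v) \<Rightarrow> ('f \<Rightarrow> nat \<Rightarrow> 'e) \<Rightarrow> bool"
where
  "ideal_triangulation E F ep fv fe \<longleftrightarrow>
     finite E \<and> finite F \<and> F \<noteq> {} \<and>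
     (\<forall>f\<in>F. \<forall>a<3. fe f a \<in> E \<and>
        {fst (ep (fe f a)), snd (ep (fe f a))} = {fv f ((a+1) mod 3), fv f ((a+2) mod 3)}) \<and>
     (\<forall>e\<in>E. card {(f,a). f \<in> F \<and> a < 3 \<and> fe f a = e} = 2) \<and>
     (\<forall>v. \<exists>f\<in>F. \<exists>a<3. fv f a = v)"

text \<open>Right-angled hyperbolic hexagon with pairwise non-adjacent sides of lengths a, b, c:
  length of the side opposite to the side of length a (cosine law).\<close>
definition hex_opp :: "real \<Rightarrow> real \<Rightarrow> real \<Rightarrow> real" where
  "hex_opp a b c = arcosh ((cosh b * cosh c + cosh a) / (sinh b * sinh c))"

definition conf_len :: "('e \<Rightarrow> 'v \<times> 'v) \<Rightarrow> ('e \<Rightarrow> real) \<Rightarrow> real^'v \<Rightarrow> 'e \<Rightarrow> real" where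
  "conf_len ep l0 w e =
     2 * arcosh (exp (w $ fst (ep e) + w $ snd (ep e)) * cosh (l0 e / 2))"

text \<open>The admissible set: all l_ij > 0, i.e. cosh(l_ij/2) > 1.\<close>
definition adm_set :: "'e set \<Rightarrow> ('e \<Rightarrow> 'v \<times> 'v) \<Rightarrow> ('e \<Rightarrow> real) \<Rightarrow> (real^'v) set" where
  "adm_set E ep l0 =
     {w. \<forall>e\<in>E. exp (w $ fst (ep e) + w $ snd (ep e)) * cosh (l0 e / 2) > 1}"

definition face_theta :: "('f \<Rightarrow> nat \<Rightarrow> 'e) \<Rightarrow> ('e \<Rightarrow> real) \<Rightarrow> 'f \<Rightarrow> nat \<Rightarrow> real" where
  "face_theta fe l f a =
     hex_opp (l (fe f a)) (l (fe f ((a+1) mod 3))) (l (fe f ((a+2) mod 3)))"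

definition bdry_len ::
  "'f set \<Rightarrow> ('f \<Rightarrow> nat \<Rightarrow> 'v) \<Rightarrow> ('f \<Rightarrow> nat \<Rightarrow> 'e) \<Rightarrow> ('e \<Rightarrow> real) \<Rightarrow> 'v \<Rightarrow> real" where
  "bdry_len F fv fe l i =
     (\<Sum>f\<in>F. \<Sum>a\<in>{a. a < 3 \<and> fv f a = i}. face_theta fe l f a)"

definition Bvec ::
  "'f set \<Rightarrow> ('e \<Rightarrow> 'v \<times> 'v) \<Rightarrow> ('f \<Rightarrow> nat \<Rightarrow> 'v) \<Rightarrow> ('f \<Rightarrow> nat \<Rightarrow> 'e) \<Rightarrow> ('e \<Rightarrow> real)
     \<Rightarrow> real^'v \<Rightarrow> real^'v" where
  "Bvec F ep fv fe l0 w = (\<chi> i. bdry_len F fv fe (conf_len ep l0 w) i)"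

end

theory Submission
  imports Defs
begin

text \<open>The vector of boundary lengths \<open>B(w)\<close> has a symmetric, negative semidefinite Jacobian on
  the convex open set of admissible \<open>w\<close>. Each face contributes the Jacobian of the three side
  lengths of its hexagon with respect to the conformal factors at its corners; this matrix is
  symmetric, and an explicit sum-of-squares identity shows it is negative semidefinite.
  Symmetry makes \<open>B\<close> a gradient field on the convex set (its potential is the line integral of
  \<open>B\<close> along rays), semidefiniteness makes the potential concave, and along the flow
  \<open>w' = B(w)\<close> the derivative of \<open>|B|\<^sup>2\<close> is \<open>2 \<langle>DB(B), B\<rangle> \<le> 0\<close>.\<close>

section \<open>Gradient fields on convex sets\<close>

lemma convex_mem_segment_point:
  assumes "convex S" and "x \<in> S" and "y \<in> S" and "t \<in> {0..1}"
  shows "y + t *\<^sub>R (x - y) \<in> S"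
proof -
  have "y + t *\<^sub>R (x - y) = (1 - t) *\<^sub>R y + t *\<^sub>R x"
    by (simp add: algebra_simps)
  then show ?thesis
    using convexD[OF assms(1,3,2), of "1 - t" t] assms(4) by simp
qed

lemma has_vector_derivative_along_segment:
  assumes "convex S" and "x \<in> S" and "y \<in> S"
    and "\<And>p. p \<in> S \<Longrightarrow> (f has_derivative f' p) (at p)"
    and "t \<in> {0..1}"
  shows "((\<lambda>t. f (y + t *\<^sub>R (x - y))) has_vector_derivative f' (y + t *\<^sub>R (x - y)) (x - y))
           (at t within T)"
proof -
  note f' = assms(4)[OF convex_mem_segment_point[OF assms(1-3,5)]]
  have "((\<lambda>t. y + t *\<^sub>R (x - y)) has_derivative (\<lambda>s. s *\<^sub>R (x - y))) (at t within T)"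
    by (auto intro!: derivative_eq_intros)
  from has_derivative_compose[OF this f'] show ?thesis
    unfolding has_vector_derivative_def
    using linear_scale[OF has_derivative_linear[OF f']] by simp
qed

lemma nsd_derivative_imp_antimonotone:
  fixes G :: "'a::real_inner \<Rightarrow> 'a"
  assumes "convex S"
    and G': "\<And>x. x \<in> S \<Longrightarrow> (G has_derivative G' x) (at x)"
    and nsd: "\<And>x h. x \<in> S \<Longrightarrow> G' x h \<bullet> h \<le> 0"
    and "x \<in> S" and "y \<in> S"
  shows "(G x - G y) \<bullet> (x - y) \<le> 0"
proof -
  have "((\<lambda>t. G (y + t *\<^sub>R (x - y)) \<bullet> (x - y)) has_derivative
      (\<lambda>s. s * (G' (y + t *\<^sub>R (x - y)) (x - y) \<bullet> (x - y)))) (at t within {0..1})"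
    if "0 \<le> t" "t \<le> 1" for t
    using has_vector_derivative_along_segment[OF assms(1,4,5) G'] that
    unfolding has_vector_derivative_def by (auto intro!: derivative_eq_intros)
  from mvt_very_simple[OF _ this] obtain t where "t \<in> {0..1}"
    and "G x \<bullet> (x - y) - G y \<bullet> (x - y) = G' (y + t *\<^sub>R (x - y)) (x - y) \<bullet> (x - y)"
    by auto
  with nsd[OF convex_mem_segment_point[OF assms(1,4,5)]] show ?thesis
    by (simp add: inner_diff_left)
qed

lemma antimonotone_gradient_imp_concave_on:
  fixes \<Phi> :: "'a::real_inner \<Rightarrow> real"
  assumes "convex S"
    and grad: "\<And>x. x \<in> S \<Longrightarrow> (\<Phi> has_derivative (\<lambda>h. G x \<bullet> h)) (at x)"
    and anti: "\<And>x y. x \<in> S \<Longrightarrow> y \<in> S \<Longrightarrow> (G x - G y) \<bullet> (x - y) \<le> 0"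
  shows "concave_on S \<Phi>"
proof -
  have tangent: "\<Phi> z \<le> \<Phi> y + G y \<bullet> (z - y)" if "y \<in> S" "z \<in> S" for y z
  proof -
    have "((\<lambda>t. \<Phi> (y + t *\<^sub>R (z - y))) has_derivative
        (\<lambda>s. s * (G (y + t *\<^sub>R (z - y)) \<bullet> (z - y)))) (at t within {0..1})"
      if "0 \<le> t" "t \<le> 1" for t
      using has_vector_derivative_along_segment[OF assms(1) \<open>z \<in> S\<close> \<open>y \<in> S\<close> grad] that
      by (simp add: has_vector_derivative_def)
    from mvt_very_simple[OF _ this] obtain t where t: "t \<in> {0..1}"
      and mvt: "\<Phi> z - \<Phi> y = G (y + t *\<^sub>R (z - y)) \<bullet> (z - y)"
      by auto
    have "t * ((G (y + t *\<^sub>R (z - y)) - G y) \<bullet> (z - y)) \<le> 0"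
      using anti[OF convex_mem_segment_point[OF assms(1) \<open>z \<in> S\<close> \<open>y \<in> S\<close> t] \<open>y \<in> S\<close>]
      by simp
    with t have "t = 0 \<or> (G (y + t *\<^sub>R (z - y)) - G y) \<bullet> (z - y) \<le> 0"
      by (auto simp: mult_le_0_iff)
    with mvt show ?thesis by (auto simp: inner_diff_left)
  qed
  show ?thesis unfolding concave_on_iff
  proof (intro conjI \<open>convex S\<close> ballI allI impI)
    fix x y and u v :: real
    assume "x \<in> S" "y \<in> S" "0 \<le> u" "0 \<le> v" "u + v = 1"
    define p where "p = u *\<^sub>R x + v *\<^sub>R y"
    have "p \<in> S" using convexD[OF assms(1) \<open>x \<in> S\<close> \<open>y \<in> S\<close>] \<open>0 \<le> u\<close> \<open>0 \<le> v\<close> \<open>u + v = 1\<close>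
      by (simp add: p_def)
    have "u * \<Phi> x + v * \<Phi> y \<le> u * (\<Phi> p + G p \<bullet> (x - p)) + v * (\<Phi> p + G p \<bullet> (y - p))"
      using tangent[OF \<open>p \<in> S\<close>] \<open>x \<in> S\<close> \<open>y \<in> S\<close> \<open>0 \<le> u\<close> \<open>0 \<le> v\<close>
      by (intro add_mono mult_left_mono) auto
    also have "\<dots> = (u + v) * \<Phi> p + G p \<bullet> (u *\<^sub>R x + v *\<^sub>R y - (u + v) *\<^sub>R p)"
      by (simp add: algebra_simps)
    also have "\<dots> = \<Phi> p"
      using \<open>u + v = 1\<close> by (simp add: p_def)
    finally show "u * \<Phi> x + v * \<Phi> y \<le> \<Phi> (u *\<^sub>R x + v *\<^sub>R y)"
      by (simp add: p_def)
  qed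
qed

lemma flow_of_nsd_field_inner_self_antimono:
  fixes G :: "'a::real_inner \<Rightarrow> 'a" and w :: "real \<Rightarrow> 'a"
  assumes G': "\<And>x. x \<in> S \<Longrightarrow> (G has_derivative G' x) (at x)"
    and nsd: "\<And>x h. x \<in> S \<Longrightarrow> G' x h \<bullet> h \<le> 0"
    and "is_interval J"
    and flow: "\<And>t. t \<in> J \<Longrightarrow> w t \<in> S \<and> (w has_vector_derivative G (w t)) (at t within J)"
    and "s \<in> J" and "t \<in> J" and "s \<le> t"
  shows "G (w t) \<bullet> G (w t) \<le> G (w s) \<bullet> G (w s)"
proof -
  have sub: "{s..t} \<subseteq> J"
    using mem_is_interval_1_I[OF \<open>is_interval J\<close> \<open>s \<in> J\<close> \<open>t \<in> J\<close>] by auto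
  have "((\<lambda>u. G (w u) \<bullet> G (w u)) has_derivative
      (\<lambda>r. 2 * (G' (w u) (r *\<^sub>R G (w u)) \<bullet> G (w u)))) (at u within {s..t})"
    if "s \<le> u" "u \<le> t" for u
  proof -
    have u: "u \<in> J" using sub that by auto
    have "(w has_derivative (\<lambda>r. r *\<^sub>R G (w u))) (at u within {s..t})"
      using has_vector_derivative_within_subset[OF flow[OF u, THEN conjunct2] sub]
      by (simp add: has_vector_derivative_def)
    from has_derivative_compose[OF this G'[of "w u"]] flow[OF u]
    have "((\<lambda>u. G (w u)) has_derivative (\<lambda>r. G' (w u) (r *\<^sub>R G (w u)))) (at u within {s..t})"
      by simp
    from has_derivative_inner[OF this this] show ?thesis
      by (simp add: inner_commute)
  qed
  from mvt_very_simple[OF \<open>s \<le> t\<close> this] obtain u where u: "u \<in> {s..t}"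
    and mvt: "G (w t) \<bullet> G (w t) - G (w s) \<bullet> G (w s) = 2 * (G' (w u) ((t - s) *\<^sub>R G (w u)) \<bullet> G (w u))"
    by auto
  have wS: "w u \<in> S" using flow sub u by auto
  interpret bounded_linear "G' (w u)"
    using G'[OF wS] by (rule has_derivative_bounded_linear)
  have "G' (w u) ((t - s) *\<^sub>R G (w u)) \<bullet> G (w u) = (t - s) * (G' (w u) (G (w u)) \<bullet> G (w u))"
    by (simp add: scale)
  also have "\<dots> \<le> 0"
    using nsd[OF wS] \<open>s \<le> t\<close> by (simp add: mult_nonneg_nonpos)
  finally show ?thesis using mvt by simp
qed

lemma has_integral_radial_derivative:
  assumes "convex S" and "x0 \<in> S" and "x \<in> S"
    and G': "\<And>p. p \<in> S \<Longrightarrow> (G has_derivative G' p) (at p)"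
  shows "((\<lambda>t. t * (G' (x0 + t *\<^sub>R (x - x0)) (x - x0) \<bullet> h) + G (x0 + t *\<^sub>R (x - x0)) \<bullet> h)
           has_integral G x \<bullet> h) {0..1}"
proof -
  have "((\<lambda>t. t * (G (x0 + t *\<^sub>R (x - x0)) \<bullet> h)) has_vector_derivative
      t * (G' (x0 + t *\<^sub>R (x - x0)) (x - x0) \<bullet> h) + G (x0 + t *\<^sub>R (x - x0)) \<bullet> h) (at t within {0..1})"
    if "t \<in> {0..1}" for t
    using has_vector_derivative_along_segment[OF assms(1,3,2) G' that]
    unfolding has_vector_derivative_def
    by (auto intro!: derivative_eq_intros simp: algebra_simps)
  from fundamental_theorem_of_calculus[OF _ this] show ?thesis
    by simp
qed

text \<open>The candidate potential of \<open>G\<close> is its line integral along the ray from \<open>x0\<close>; it is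
  differentiated under the integral sign, which is where continuity of \<open>G'\<close> is needed.\<close>
lemma has_derivative_radial_integral:
  fixes G :: "'a::euclidean_space \<Rightarrow> 'a"
  assumes "open S" and "convex S" and "x0 \<in> S" and "x \<in> S"
    and G': "\<And>p. p \<in> S \<Longrightarrow> (G has_derivative G' p) (at p)"
    and cont: "\<And>h. continuous_on S (\<lambda>p. G' p h)"
  shows "((\<lambda>x. integral {0..1} (\<lambda>t. G (x0 + t *\<^sub>R (x - x0)) \<bullet> (x - x0))) has_derivative
           (\<lambda>h. integral {0..1} (\<lambda>t. t * (G' (x0 + t *\<^sub>R (x - x0)) h \<bullet> (x - x0))
                                      + G (x0 + t *\<^sub>R (x - x0)) \<bullet> h))) (at x)"
proof -
  define DG where "DG p = Blinfun (G' p)" for p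
  have DG: "blinfun_apply (DG p) = G' p" if "p \<in> S" for p
    unfolding DG_def using G'[OF that] by (auto intro: bounded_linear_Blinfun_apply)
  have "continuous_on S DG"
    by (intro continuous_on_blinfun_componentwise continuous_on_eq[OF cont]) (simp add: DG)
  define y where "y x t = x0 + t *\<^sub>R (x - x0)" for x and t :: real
  have y: "y x t \<in> S" if "x \<in> S" "t \<in> cbox 0 1" for x t
    using convex_mem_segment_point[OF assms(2) that(1) assms(3)] that(2) by (simp add: y_def)
  define fx where "fx x t = t *\<^sub>R (blinfun_inner_left (x - x0) o\<^sub>L DG (y x t)) + blinfun_inner_left (G (y x t))"
    for x t
  have "continuous_on (S \<times> cbox 0 1) (\<lambda>(x, t). y x t)"
    by (auto simp: y_def split_beta intro!: continuous_intros)
  moreover have "continuous_on S G"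
    using G' by (meson continuous_at_imp_continuous_on has_derivative_continuous)
  moreover have "(\<lambda>(x, t). y x t) ` (S \<times> cbox 0 1) \<subseteq> S" using y by auto
  ultimately have fx_cont: "continuous_on (S \<times> cbox 0 1) (\<lambda>(x, t). fx x t)"
    using continuous_on_compose2[OF \<open>continuous_on S DG\<close>] continuous_on_compose2[OF \<open>continuous_on S G\<close>]
    unfolding fx_def split_beta by (intro continuous_intros) auto
  moreover have "((\<lambda>x. G (y x t) \<bullet> (x - x0)) has_derivative blinfun_apply (fx x t)) (at x within S)"
    if "x \<in> S" "t \<in> cbox 0 1" for x t
  proof -
    have "((\<lambda>x. y x t) has_derivative (\<lambda>h. t *\<^sub>R h)) (at x within S)"
      unfolding y_def by (auto intro!: derivative_eq_intros)
    from has_derivative_compose[OF this G'[OF y[OF that]]]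
    have "((\<lambda>x. G (y x t) \<bullet> (x - x0)) has_derivative
        (\<lambda>h. G' (y x t) (t *\<^sub>R h) \<bullet> (x - x0) + G (y x t) \<bullet> h)) (at x within S)"
      by (auto intro!: derivative_eq_intros)
    then show ?thesis
      by (rule has_derivative_eq_rhs)
        (auto simp: fx_def DG[OF y[OF that]] fun_eq_iff blinfun.add_left blinfun.scaleR_left inner_commute
          linear_scale[OF has_derivative_linear[OF G'[OF y[OF that]]]])
  qed
  moreover have "(\<lambda>t. G (y z t) \<bullet> (z - x0)) integrable_on cbox 0 1" if "z \<in> S" for z
    using y[OF that]
    by (intro integrable_continuous continuous_intros continuous_on_compose2[OF \<open>continuous_on S G\<close>])
      (auto simp: y_def intro!: continuous_intros)
  ultimately have "((\<lambda>x. integral (cbox 0 1) (\<lambda>t. G (y x t) \<bullet> (x - x0))) has_derivative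
      blinfun_apply (integral (cbox 0 1) (fx x))) (at x)"
    using leibniz_rule[of S 0 1 _ fx x] assms(2,4) at_within_open[OF assms(4,1)] by fastforce
  moreover have "fx x integrable_on cbox 0 1"
    using \<open>x \<in> S\<close>
    by (intro integrable_continuous continuous_on_compose2[OF fx_cont, of _ "\<lambda>t. (x, t)", simplified])
      (auto intro!: continuous_intros)
  then have "blinfun_apply (integral (cbox 0 1) (fx x))
      = (\<lambda>h. integral {0..1} (\<lambda>t. t * (G' (y x t) h \<bullet> (x - x0)) + G (y x t) \<bullet> h))"
    using \<open>x \<in> S\<close> by (auto simp: blinfun_apply_integral fx_def blinfun.add_left blinfun.scaleR_left
        DG y inner_commute intro!: ext integral_cong)
  ultimately show ?thesis
    by (simp add: y_def)
qed

lemma symmetric_derivative_imp_gradient: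
  fixes G :: "'a::euclidean_space \<Rightarrow> 'a"
  assumes "open S" and "convex S" and "x0 \<in> S"
    and G': "\<And>x. x \<in> S \<Longrightarrow> (G has_derivative G' x) (at x)"
    and cont: "\<And>h. continuous_on S (\<lambda>x. G' x h)"
    and sym: "\<And>x h k. x \<in> S \<Longrightarrow> G' x h \<bullet> k = G' x k \<bullet> h"
  shows "\<exists>\<Phi>. \<forall>x\<in>S. (\<Phi> has_derivative (\<lambda>h. G x \<bullet> h)) (at x)"
proof (intro exI ballI)
  fix x assume "x \<in> S"
  have "((\<lambda>t. t * (G' (x0 + t *\<^sub>R (x - x0)) h \<bullet> (x - x0)) + G (x0 + t *\<^sub>R (x - x0)) \<bullet> h)
      has_integral G x \<bullet> h) {0..1}" for h
    using has_integral_radial_derivative[OF assms(2,3) \<open>x \<in> S\<close> G']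
    by (rule has_integral_eq[rotated])
      (auto simp: sym[of _ "x - x0"] convex_mem_segment_point[OF assms(2) \<open>x \<in> S\<close> assms(3)])
  then have "(\<lambda>h. integral {0..1} (\<lambda>t. t * (G' (x0 + t *\<^sub>R (x - x0)) h \<bullet> (x - x0))
                                    + G (x0 + t *\<^sub>R (x - x0)) \<bullet> h)) = (\<lambda>h. G x \<bullet> h)"
    by (auto intro!: integral_unique)
  with has_derivative_radial_integral[OF assms(1-3) \<open>x \<in> S\<close> G' cont]
  show "((\<lambda>x. integral {0..1} (\<lambda>t. G (x0 + t *\<^sub>R (x - x0)) \<bullet> (x - x0))) has_derivative
      (\<lambda>h. G x \<bullet> h)) (at x)"
    by simp
qed

section \<open>Right-angled hexagons\<close>

text \<open>By \<open>hex_gram_eq\<close>, \<open>hex_gram a b c / ((b\<^sup>2 - 1)(c\<^sup>2 - 1))\<close> is \<open>sinh\<^sup>2\<close> of the side computed by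
  \<open>hex_opp_cosh\<close>, which is \<open>hex_opp\<close> written in the hyperbolic cosines of the three given sides.\<close>
definition hex_gram :: "real \<Rightarrow> real \<Rightarrow> real \<Rightarrow> real" where
  "hex_gram a b c = a^2 + b^2 + c^2 + 2*a*b*c - 1"

definition hex_opp_cosh :: "real \<Rightarrow> real \<Rightarrow> real \<Rightarrow> real" where
  "hex_opp_cosh a b c = arcosh ((b*c + a) / sqrt ((b^2 - 1) * (c^2 - 1)))"

lemma hex_gram_pos:
  assumes "a > 1" and "b > 1" and "c > 1"
  shows "hex_gram a b c > 0"
proof -
  from assms have "a^2 > 1" "b^2 > 1" "c^2 > 1" "a*b*c > 0" by (simp_all add: one_less_power)
  then show ?thesis unfolding hex_gram_def by linarith
qed

lemma hex_gram_rotate: "hex_gram b c a = hex_gram a b c"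
  unfolding hex_gram_def by (simp add: algebra_simps)

lemma hex_gram_eq: "hex_gram a b c = (b*c + a)^2 - (b^2 - 1) * (c^2 - 1)"
  unfolding hex_gram_def by (simp add: power2_eq_square algebra_simps)

lemma hex_opp_cosh_arg:
  assumes "a > 1" "b > 1" "c > 1"
  defines "z \<equiv> (b*c + a) / sqrt ((b^2 - 1) * (c^2 - 1))"
  shows "z > 1" and "sqrt (z^2 - 1) = sqrt (hex_gram a b c) / sqrt ((b^2 - 1) * (c^2 - 1))"
proof -
  have "b^2 > 1" "c^2 > 1"
    using assms by (simp_all add: one_less_power)
  then have q: "(b^2 - 1) * (c^2 - 1) > 0"
    by simp
  with \<open>b^2 > 1\<close> \<open>c^2 > 1\<close> have z2: "z^2 - 1 = hex_gram a b c / ((b^2 - 1) * (c^2 - 1))"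
    by (simp add: z_def power_divide hex_gram_eq diff_divide_distrib)
  then show "sqrt (z^2 - 1) = sqrt (hex_gram a b c) / sqrt ((b^2 - 1) * (c^2 - 1))"
    by (simp add: real_sqrt_divide)
  have "hex_gram a b c / ((b^2 - 1) * (c^2 - 1)) > 0"
    using hex_gram_pos[OF assms(1-3)] q by simp
  with z2 have "z^2 > 1"
    by linarith
  moreover have "z > 0"
    unfolding z_def using q assms by (intro divide_pos_pos add_pos_pos mult_pos_pos) auto
  ultimately show "z > 1"
    using power2_less_imp_less[of 1 z] by simp
qed

lemma has_derivative_hex_opp_cosh_arg:
  fixes A B C :: "'a::real_normed_vector \<Rightarrow> real"
  assumes A': "(A has_derivative A') (at w)" and B': "(B has_derivative B') (at w)"
    and C': "(C has_derivative C') (at w)"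
    and "B w > 1" and "C w > 1"
  shows "((\<lambda>w. (B w * C w + A w) / sqrt (((B w)^2 - 1) * ((C w)^2 - 1))) has_derivative
     (\<lambda>h. (A' h - (C w + A w * B w) / ((B w)^2 - 1) * B' h - (B w + A w * C w) / ((C w)^2 - 1) * C' h)
          / sqrt (((B w)^2 - 1) * ((C w)^2 - 1)))) (at w)"
proof -
  define q where "q w = ((B w)^2 - 1) * ((C w)^2 - 1)" for w
  define N where "N h = B' h * C w + B w * C' h + A' h" for h
  define Q' where "Q' h = 2 * B w * B' h * ((C w)^2 - 1) + 2 * C w * C' h * ((B w)^2 - 1)" for h
  have "(B w)^2 > 1" "(C w)^2 > 1"
    using assms by (simp_all add: one_less_power)
  then have "q w > 0" by (simp add: q_def)
  have "(q has_derivative Q') (at w)"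
    unfolding q_def
    by (rule has_derivative_eq_rhs, (rule derivative_eq_intros B' C' refl)+) (simp add: Q'_def fun_eq_iff)
  from has_derivative_real_sqrt[of q, OF \<open>q w > 0\<close> this]
  have sqrt_q': "((\<lambda>w. sqrt (q w)) has_derivative (\<lambda>h. Q' h / (2 * sqrt (q w)))) (at w)"
    by (rule has_derivative_eq_rhs) (simp add: fun_eq_iff field_simps)
  obtain s where s: "sqrt (q w) = s" "q w = s * s" "s > 0"
    using \<open>q w > 0\<close> by (intro that[of "sqrt (q w)"]) simp_all
  have "((\<lambda>w. B w * C w + A w) has_derivative N) (at w)"
    unfolding N_def by (rule has_derivative_eq_rhs, (rule derivative_eq_intros A' B' C' refl)+) (simp add: fun_eq_iff)
  from has_derivative_divide'[OF this sqrt_q']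
  have "((\<lambda>w. (B w * C w + A w) / sqrt (q w)) has_derivative
      (\<lambda>h. (N h - (B w * C w + A w) * Q' h / (2 * q w)) / sqrt (q w))) (at w)"
    unfolding s(1) unfolding s(2)
    by (rule has_derivative_eq_rhs) (use s(3) in \<open>simp_all add: fun_eq_iff field_simps\<close>)
  moreover have "N h - (B w * C w + A w) * Q' h / (2 * q w)
      = A' h - (C w + A w * B w) / ((B w)^2 - 1) * B' h - (B w + A w * C w) / ((C w)^2 - 1) * C' h" for h
    using \<open>(B w)^2 > 1\<close> \<open>(C w)^2 > 1\<close>
    by (simp add: N_def Q'_def q_def divide_simps) algebra
  ultimately show ?thesis
    by (simp add: q_def)
qed

lemma has_derivative_hex_opp_cosh:
  fixes A B C :: "'a::real_normed_vector \<Rightarrow> real"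
  assumes "(A has_derivative A') (at w)" and "(B has_derivative B') (at w)"
    and "(C has_derivative C') (at w)"
    and "A w > 1" and "B w > 1" and "C w > 1"
  shows "((\<lambda>w. hex_opp_cosh (A w) (B w) (C w)) has_derivative
     (\<lambda>h. (A' h - (C w + A w * B w) / ((B w)^2 - 1) * B' h - (B w + A w * C w) / ((C w)^2 - 1) * C' h)
          / sqrt (hex_gram (A w) (B w) (C w)))) (at w)"
proof -
  have "(B w)^2 > 1" "(C w)^2 > 1" "hex_gram (A w) (B w) (C w) > 0"
    using assms(5,6) hex_gram_pos[OF assms(4-6)] by (simp_all add: one_less_power)
  with DERIV_compose_FDERIV[OF arcosh_real_has_field_derivative[OF hex_opp_cosh_arg(1)[OF assms(4-6)]]
      has_derivative_hex_opp_cosh_arg[OF assms(1-3,5,6)]]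
  show ?thesis
    unfolding hex_opp_cosh_def hex_opp_cosh_arg(2)[OF assms(4-6)] by simp
qed

text \<open>The differential of \<open>hex_opp_cosh y\<^sub>a y\<^sub>b y\<^sub>c\<close> when each \<open>y\<^sub>a = cosh l\<^sub>a\<close> moves by
  \<open>2 (y\<^sub>a + 1) (h\<^sub>b + h\<^sub>c)\<close>, as it does under a change \<open>h\<close> of the conformal factors at the corners
  (\<open>has_derivative_conf_cosh\<close>, \<open>theta_diff_eq\<close>).\<close>
definition theta_diff :: "real \<Rightarrow> real \<Rightarrow> real \<Rightarrow> real \<Rightarrow> real \<Rightarrow> real \<Rightarrow> real" where
  "theta_diff ya yb yc ha hb hc =
     2 * ((ya + 1) * (hb + hc) - (yc + ya * yb) / (yb - 1) * (hc + ha) - (yb + ya * yc) / (yc - 1) * (ha + hb))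
       / sqrt (hex_gram ya yb yc)"

text \<open>One face's share of \<open>\<langle>dB(h), k\<rangle>\<close> (\<open>inner_Bvec_diff\<close>).\<close>
definition face_hessian ::
  "real \<Rightarrow> real \<Rightarrow> real \<Rightarrow> real \<Rightarrow> real \<Rightarrow> real \<Rightarrow> real \<Rightarrow> real \<Rightarrow> real \<Rightarrow> real" where
  "face_hessian y0 y1 y2 k0 k1 k2 h0 h1 h2 =
     k0 * theta_diff y0 y1 y2 h0 h1 h2 + k1 * theta_diff y1 y2 y0 h1 h2 h0 + k2 * theta_diff y2 y0 y1 h2 h0 h1"

lemma face_hessian_mult_sqrt_hex_gram:
  assumes "y0 > 1" and "y1 > 1" and "y2 > 1"
  shows "face_hessian y0 y1 y2 k0 k1 k2 h0 h1 h2 * sqrt (hex_gram y0 y1 y2) =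
     k0 * (2 * ((y0 + 1) * (h1 + h2) - (y2 + y0 * y1) / (y1 - 1) * (h2 + h0) - (y1 + y0 * y2) / (y2 - 1) * (h0 + h1)))
   + k1 * (2 * ((y1 + 1) * (h2 + h0) - (y0 + y1 * y2) / (y2 - 1) * (h0 + h1) - (y2 + y1 * y0) / (y0 - 1) * (h1 + h2)))
   + k2 * (2 * ((y2 + 1) * (h0 + h1) - (y1 + y2 * y0) / (y0 - 1) * (h1 + h2) - (y0 + y2 * y1) / (y1 - 1) * (h2 + h0)))"
proof -
  have "sqrt (hex_gram y0 y1 y2) > 0"
    using hex_gram_pos[OF assms] by simp
  then show ?thesis
    unfolding face_hessian_def theta_diff_def hex_gram_rotate[of y0 y1 y2] hex_gram_rotate[of y2 y0 y1, symmetric]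
    by (simp add: distrib_right)
qed

lemma face_hessian_sym:
  assumes "y0 > 1" "y1 > 1" "y2 > 1"
  shows "face_hessian y0 y1 y2 k0 k1 k2 h0 h1 h2 = face_hessian y0 y1 y2 h0 h1 h2 k0 k1 k2"
proof -
  obtain p0 p1 p2 where "p0 > 0" "p1 > 0" "p2 > 0" and y: "y0 = p0 + 1" "y1 = p1 + 1" "y2 = p2 + 1"
    using assms by (metis add.commute diff_add_cancel diff_gt_0_iff_gt)
  have "face_hessian y0 y1 y2 k0 k1 k2 h0 h1 h2 * sqrt (hex_gram y0 y1 y2)
      = face_hessian y0 y1 y2 h0 h1 h2 k0 k1 k2 * sqrt (hex_gram y0 y1 y2)"
    unfolding face_hessian_mult_sqrt_hex_gram[OF assms] unfolding y
    using \<open>p0 > 0\<close> \<open>p1 > 0\<close> \<open>p2 > 0\<close> by (simp add: field_simps)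
  moreover have "sqrt (hex_gram y0 y1 y2) > 0"
    using hex_gram_pos[OF assms] by simp
  ultimately show ?thesis by simp
qed

text \<open>A sum-of-squares certificate: with \<open>p\<^sub>a = y\<^sub>a - 1 > 0\<close> and \<open>z\<^sub>a = h\<^sub>a\<^sub>+\<^sub>1 + h\<^sub>a\<^sub>+\<^sub>2\<close>,
  the quadratic form times \<open>- sqrt (hex_gram y0 y1 y2) / 2\<close> equals the manifestly nonnegative \<open>S\<close>.\<close>
lemma face_hessian_nonpos:
  assumes "y0 > 1" "y1 > 1" "y2 > 1"
  shows "face_hessian y0 y1 y2 h0 h1 h2 h0 h1 h2 \<le> 0"
proof -
  obtain p0 p1 p2 where "p0 > 0" "p1 > 0" "p2 > 0" and y: "y0 = p0 + 1" "y1 = p1 + 1" "y2 = p2 + 1"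
    using assms by (metis add.commute diff_add_cancel diff_gt_0_iff_gt)
  define z0 where "z0 = h1 + h2"
  define z1 where "z1 = h2 + h0"
  define z2 where "z2 = h0 + h1"
  define S where "S = (2 + (p0 + p1 + p2) / 2) * (z0^2 / p0 + z1^2 / p1 + z2^2 / p2)
     + (1/2) * ((p0*z1 - p1*z0)^2 / (p0*p1) + (p0*z2 - p2*z0)^2 / (p0*p2) + (p1*z2 - p2*z1)^2 / (p1*p2))
     + 2 * (h0^2 + h1^2 + h2^2) + 2 * (p0*h0^2 + p1*h1^2 + p2*h2^2)"
  have "S \<ge> 0"
    unfolding S_def using \<open>p0 > 0\<close> \<open>p1 > 0\<close> \<open>p2 > 0\<close>
    by (intro add_nonneg_nonneg mult_nonneg_nonneg divide_nonneg_pos) auto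
  moreover have "face_hessian y0 y1 y2 h0 h1 h2 h0 h1 h2 * sqrt (hex_gram y0 y1 y2) = -2 * S"
    unfolding face_hessian_mult_sqrt_hex_gram[OF assms] unfolding S_def z0_def z1_def z2_def y
    using \<open>p0 > 0\<close> \<open>p1 > 0\<close> \<open>p2 > 0\<close> by (simp add: field_simps) algebra
  ultimately have "face_hessian y0 y1 y2 h0 h1 h2 h0 h1 h2 * sqrt (hex_gram y0 y1 y2) \<le> 0"
    by simp
  moreover have "sqrt (hex_gram y0 y1 y2) > 0"
    using hex_gram_pos[OF assms] by simp
  ultimately show ?thesis
    by (simp add: mult_le_0_iff)
qed

section \<open>Conformal change of the edge lengths\<close>

text \<open>\<open>conf_cosh\<close> is \<open>cosh\<close> of \<open>conf_len\<close>, by \<open>cosh l = 2 cosh\<^sup>2 (l/2) - 1\<close>.\<close>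
definition conf_cosh :: "('e \<Rightarrow> 'v \<times> 'v) \<Rightarrow> ('e \<Rightarrow> real) \<Rightarrow> real^'v \<Rightarrow> 'e \<Rightarrow> real" where
  "conf_cosh ep l0 w e = 2 * (exp (w $ fst (ep e) + w $ snd (ep e)) * cosh (l0 e / 2))^2 - 1"

lemma adm_set_iff:
  "w \<in> adm_set E ep l0 \<longleftrightarrow> (\<forall>e\<in>E. - ln (cosh (l0 e / 2)) < w $ fst (ep e) + w $ snd (ep e))"
proof -
  have "exp s * cosh (l0 e / 2) > 1 \<longleftrightarrow> - ln (cosh (l0 e / 2)) < s" for s e
  proof -
    have c: "cosh (l0 e / 2) > 0"
      using cosh_real_ge_1[of "l0 e / 2"] by linarith
    then have "exp s * cosh (l0 e / 2) > 1 \<longleftrightarrow> ln (exp s * cosh (l0 e / 2)) > 0"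
      by (simp add: ln_gt_zero_iff)
    also have "\<dots> \<longleftrightarrow> - ln (cosh (l0 e / 2)) < s"
      using c by (simp add: ln_mult) arith
    finally show ?thesis .
  qed
  then show ?thesis unfolding adm_set_def by auto
qed

lemma adm_set_eq_INT:
  "adm_set E ep l0 = (\<Inter>e\<in>E. {w. - ln (cosh (l0 e / 2)) < (axis (fst (ep e)) 1 + axis (snd (ep e)) 1) \<bullet> w})"
  by (auto simp: adm_set_iff inner_add_left inner_axis')

lemma open_adm_set: "finite E \<Longrightarrow> open (adm_set E ep l0)"
  unfolding adm_set_eq_INT by (intro open_INT ballI open_halfspace_gt)

lemma convex_adm_set: "convex (adm_set E ep l0)"
  unfolding adm_set_eq_INT by (intro convex_INT convex_halfspace_gt)

lemma one_mem_adm_set: "(\<chi> i. 1) \<in> adm_set E ep l0"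
proof -
  have "- ln (cosh (l0 e / 2)) < 1 + 1" for e
    using ln_ge_zero[OF cosh_real_ge_1[of "l0 e / 2"]] by linarith
  then show ?thesis unfolding adm_set_iff by simp
qed

lemma conf_cosh_gt_1:
  assumes "w \<in> adm_set E ep l0" and "e \<in> E"
  shows "conf_cosh ep l0 w e > 1"
proof -
  have "exp (w $ fst (ep e) + w $ snd (ep e)) * cosh (l0 e / 2) > 1"
    using assms unfolding adm_set_def by auto
  then have "(exp (w $ fst (ep e) + w $ snd (ep e)) * cosh (l0 e / 2))^2 > 1"
    by (simp add: one_less_power)
  then show ?thesis unfolding conf_cosh_def by linarith
qed

lemma cosh_sinh_conf_len:
  assumes "w \<in> adm_set E ep l0" and "e \<in> E"
  shows "cosh (conf_len ep l0 w e) = conf_cosh ep l0 w e"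
    and "sinh (conf_len ep l0 w e) = sqrt ((conf_cosh ep l0 w e)^2 - 1)"
proof -
  have x: "exp (w $ fst (ep e) + w $ snd (ep e)) * cosh (l0 e / 2) > 1"
    using assms unfolding adm_set_def by auto
  then show cosh: "cosh (conf_len ep l0 w e) = conf_cosh ep l0 w e"
    unfolding conf_len_def conf_cosh_def cosh_double_cosh by simp
  have "conf_len ep l0 w e \<ge> 0"
    unfolding conf_len_def using x by simp
  moreover have "(sinh (conf_len ep l0 w e))^2 = (conf_cosh ep l0 w e)^2 - 1"
    unfolding cosh[symmetric] by (simp add: sinh_square_eq)
  ultimately show "sinh (conf_len ep l0 w e) = sqrt ((conf_cosh ep l0 w e)^2 - 1)"
    by (metis real_sqrt_unique sinh_real_nonneg_iff)
qed

lemma has_derivative_vec_nth [derivative_intros]: "((\<lambda>x. x $ i) has_derivative (\<lambda>h. h $ i)) F"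
  by (rule bounded_linear_imp_has_derivative[OF bounded_linear_vec_nth])

lemma has_derivative_conf_cosh:
  "((\<lambda>w. conf_cosh ep l0 w e) has_derivative
     (\<lambda>h. 2 * (conf_cosh ep l0 w e + 1) * (h $ fst (ep e) + h $ snd (ep e)))) (at w)"
  unfolding conf_cosh_def
  by (rule has_derivative_eq_rhs, (rule derivative_eq_intros refl)+)
    (simp add: fun_eq_iff power2_eq_square field_simps)

lemma continuous_on_conf_cosh: "continuous_on S (\<lambda>w. conf_cosh ep l0 w e)"
  unfolding conf_cosh_def by (intro continuous_intros)

lemma theta_diff_eq:
  assumes "yb > 1" and "yc > 1"
  shows "(2 * (ya + 1) * (hb + hc) - (yc + ya * yb) / (yb^2 - 1) * (2 * (yb + 1) * (hc + ha))
          - (yb + ya * yc) / (yc^2 - 1) * (2 * (yc + 1) * (ha + hb))) / sqrt (hex_gram ya yb yc)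
       = theta_diff ya yb yc ha hb hc"
proof -
  have sq: "y^2 - 1 = (y - 1) * (y + 1)" for y :: real
    by (simp add: power2_eq_square algebra_simps)
  have cancel: "x / ((y - 1) * (y + 1)) * (2 * (y + 1) * z) = 2 * x / (y - 1) * z"
    if "y > 1" for x y z :: real
  proof -
    have "y - 1 \<noteq> 0" "y + 1 \<noteq> 0" "y * y - 1 \<noteq> 0"
      using that mult_strict_mono[OF that that] by auto
    then show ?thesis by (simp add: field_simps)
  qed
  show ?thesis
    unfolding theta_diff_def sq cancel[OF assms(1)] cancel[OF assms(2)] by (simp add: algebra_simps)
qed

lemma ideal_triangulation_face_edge:
  fixes w :: "real^'v"
  assumes "ideal_triangulation E F ep fv fe" and "f \<in> F" and "a < 3"
  shows "fe f a \<in> E"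
    and "w $ fst (ep (fe f a)) + w $ snd (ep (fe f a)) = w $ fv f ((a+1) mod 3) + w $ fv f ((a+2) mod 3)"
proof -
  have "fe f a \<in> E \<and> {fst (ep (fe f a)), snd (ep (fe f a))} = {fv f ((a+1) mod 3), fv f ((a+2) mod 3)}"
    using assms unfolding ideal_triangulation_def by blast
  then show "fe f a \<in> E"
    and "w $ fst (ep (fe f a)) + w $ snd (ep (fe f a)) = w $ fv f ((a+1) mod 3) + w $ fv f ((a+2) mod 3)"
    by (auto simp: doubleton_eq_iff)
qed

lemma mod_3_rotate:
  assumes "a < (3::nat)"
  shows "(a+1) mod 3 < 3" "(a+2) mod 3 < 3"
    "((a+1) mod 3 + 1) mod 3 = (a+2) mod 3" "((a+1) mod 3 + 2) mod 3 = a"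
    "((a+2) mod 3 + 1) mod 3 = a" "((a+2) mod 3 + 2) mod 3 = (a+1) mod 3"
proof -
  have "a = 0 \<or> a = 1 \<or> a = 2"
    using assms by linarith
  then show "(a+1) mod 3 < 3" "(a+2) mod 3 < 3"
    "((a+1) mod 3 + 1) mod 3 = (a+2) mod 3" "((a+1) mod 3 + 2) mod 3 = a"
    "((a+2) mod 3 + 1) mod 3 = a" "((a+2) mod 3 + 2) mod 3 = (a+1) mod 3"
    by auto
qed

lemma conf_cosh_face_gt_1:
  assumes "ideal_triangulation E F ep fv fe" and "f \<in> F" and "b < 3" and "w \<in> adm_set E ep l0"
  shows "conf_cosh ep l0 w (fe f b) > 1"
  using conf_cosh_gt_1[OF assms(4) ideal_triangulation_face_edge(1)[OF assms(1-3)]] .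

lemma face_theta_eq_hex_opp_cosh:
  assumes tri: "ideal_triangulation E F ep fv fe" and "f \<in> F" and "a < 3"
    and w: "w \<in> adm_set E ep l0"
  shows "face_theta fe (conf_len ep l0 w) f a =
    hex_opp_cosh (conf_cosh ep l0 w (fe f a)) (conf_cosh ep l0 w (fe f ((a+1) mod 3)))
      (conf_cosh ep l0 w (fe f ((a+2) mod 3)))"
proof -
  have "fe f a \<in> E" "fe f ((a+1) mod 3) \<in> E" "fe f ((a+2) mod 3) \<in> E"
    using ideal_triangulation_face_edge(1)[OF tri \<open>f \<in> F\<close>] mod_3_rotate(1,2) \<open>a < 3\<close> by auto
  then show ?thesis
    unfolding face_theta_def hex_opp_def hex_opp_cosh_def real_sqrt_mult
    by (simp add: cosh_sinh_conf_len[OF w])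
qed

lemma has_derivative_conf_cosh_face:
  assumes "ideal_triangulation E F ep fv fe" and "f \<in> F" and "b < 3"
  shows "((\<lambda>w. conf_cosh ep l0 w (fe f b)) has_derivative (\<lambda>h. 2 * (conf_cosh ep l0 w (fe f b) + 1)
           * (h $ fv f ((b+1) mod 3) + h $ fv f ((b+2) mod 3)))) (at w)"
  using has_derivative_conf_cosh[of ep l0 "fe f b" w] unfolding ideal_triangulation_face_edge(2)[OF assms] .

lemma has_derivative_face_theta:
  assumes tri: "ideal_triangulation E F ep fv fe" and f: "f \<in> F" and a: "a < 3"
    and w: "w \<in> adm_set E ep l0"
  shows "((\<lambda>w. face_theta fe (conf_len ep l0 w) f a) has_derivative
    (\<lambda>h. theta_diff (conf_cosh ep l0 w (fe f a)) (conf_cosh ep l0 w (fe f ((a+1) mod 3)))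
           (conf_cosh ep l0 w (fe f ((a+2) mod 3))) (h $ fv f a) (h $ fv f ((a+1) mod 3))
           (h $ fv f ((a+2) mod 3)))) (at w)"
proof -
  have fE: "finite E" using tri unfolding ideal_triangulation_def by simp
  have gt: "conf_cosh ep l0 w (fe f a) > 1" "conf_cosh ep l0 w (fe f ((a+1) mod 3)) > 1"
    "conf_cosh ep l0 w (fe f ((a+2) mod 3)) > 1"
    using conf_cosh_face_gt_1[OF tri f _ w] mod_3_rotate(1,2) a by auto
  note d = has_derivative_conf_cosh_face[OF tri f a, of l0 w]
    has_derivative_conf_cosh_face[OF tri f mod_3_rotate(1)[OF a], of l0 w, unfolded mod_3_rotate[OF a]]
    has_derivative_conf_cosh_face[OF tri f mod_3_rotate(2)[OF a], of l0 w, unfolded mod_3_rotate[OF a]]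
  have "((\<lambda>w. hex_opp_cosh (conf_cosh ep l0 w (fe f a)) (conf_cosh ep l0 w (fe f ((a+1) mod 3)))
      (conf_cosh ep l0 w (fe f ((a+2) mod 3)))) has_derivative
    (\<lambda>h. theta_diff (conf_cosh ep l0 w (fe f a)) (conf_cosh ep l0 w (fe f ((a+1) mod 3)))
           (conf_cosh ep l0 w (fe f ((a+2) mod 3))) (h $ fv f a) (h $ fv f ((a+1) mod 3))
           (h $ fv f ((a+2) mod 3)))) (at w)"
    by (rule has_derivative_eq_rhs[OF has_derivative_hex_opp_cosh[OF d gt]])
      (rule ext, rule theta_diff_eq[OF gt(2,3)])
  then show ?thesis
    by (rule has_derivative_transform_within_open[OF _ open_adm_set[OF fE] w])
      (simp add: face_theta_eq_hex_opp_cosh[OF tri f a])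
qed

section \<open>The derivative of the boundary lengths\<close>

definition Bvec_diff :: "'f set \<Rightarrow> ('e \<Rightarrow> 'v::finite \<times> 'v) \<Rightarrow> ('f \<Rightarrow> nat \<Rightarrow> 'v) \<Rightarrow> ('f \<Rightarrow> nat \<Rightarrow> 'e)
    \<Rightarrow> ('e \<Rightarrow> real) \<Rightarrow> real^'v \<Rightarrow> real^'v \<Rightarrow> real^'v" where
  "Bvec_diff F ep fv fe l0 w h = (\<Sum>f\<in>F. \<Sum>a<3.
     theta_diff (conf_cosh ep l0 w (fe f a)) (conf_cosh ep l0 w (fe f ((a+1) mod 3)))
       (conf_cosh ep l0 w (fe f ((a+2) mod 3))) (h $ fv f a) (h $ fv f ((a+1) mod 3))
       (h $ fv f ((a+2) mod 3)) *\<^sub>R axis (fv f a) 1)"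

lemma Bvec_eq_sum:
  "Bvec F ep fv fe l0 w = (\<Sum>f\<in>F. \<Sum>a<3. face_theta fe (conf_len ep l0 w) f a *\<^sub>R axis (fv f a) 1)"
proof -
  have "(\<Sum>a\<in>{a. a < 3 \<and> fv f a = i}. g a) = (\<Sum>a<3. if i = fv f a then g a else 0)"
    for f i and g :: "nat \<Rightarrow> real"
    by (simp add: sum.inter_filter[symmetric] conj_commute eq_commute)
  then show ?thesis
    unfolding Bvec_def bdry_len_def vec_eq_iff by (simp add: axis_def if_distrib cong: if_cong)
qed

lemma has_derivative_Bvec:
  assumes tri: "ideal_triangulation E F ep fv fe" and w: "w \<in> adm_set E ep l0"
  shows "(Bvec F ep fv fe l0 has_derivative Bvec_diff F ep fv fe l0 w) (at w)"
  unfolding Bvec_eq_sum[abs_def] Bvec_diff_def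
  by (intro has_derivative_sum has_derivative_scaleR_left has_derivative_face_theta[OF tri _ _ w]) auto

lemma continuous_on_theta_diff:
  assumes "continuous_on S Ya" "continuous_on S Yb" "continuous_on S Yc"
    and "\<And>x. x \<in> S \<Longrightarrow> Ya x > 1 \<and> Yb x > 1 \<and> Yc x > 1"
  shows "continuous_on S (\<lambda>x. theta_diff (Ya x) (Yb x) (Yc x) ha hb hc)"
proof -
  have "Yb x - 1 \<noteq> 0" "Yc x - 1 \<noteq> 0" "sqrt (hex_gram (Ya x) (Yb x) (Yc x)) \<noteq> 0" if "x \<in> S" for x
    using assms(4)[OF that] hex_gram_pos[of "Ya x" "Yb x" "Yc x"] by auto
  then show ?thesis
    unfolding theta_diff_def hex_gram_def
    by (intro continuous_intros assms(1-3)) (auto simp: hex_gram_def)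
qed

lemma continuous_on_Bvec_diff:
  assumes tri: "ideal_triangulation E F ep fv fe"
  shows "continuous_on (adm_set E ep l0) (\<lambda>w. Bvec_diff F ep fv fe l0 w h)"
  unfolding Bvec_diff_def
  by (intro continuous_intros continuous_on_theta_diff continuous_on_conf_cosh)
    (auto simp: mod_3_rotate conf_cosh_face_gt_1[OF tri])

lemma sum_lessThan_3:
  fixes g :: "nat \<Rightarrow> 'a::comm_monoid_add"
  shows "(\<Sum>a<3. g a) = g 0 + g 1 + g 2"
  by (simp add: numeral_3_eq_3 numeral_2_eq_2 lessThan_Suc add_ac)

lemma inner_Bvec_diff:
  "Bvec_diff F ep fv fe l0 w h \<bullet> k = (\<Sum>f\<in>F.
     face_hessian (conf_cosh ep l0 w (fe f 0)) (conf_cosh ep l0 w (fe f 1)) (conf_cosh ep l0 w (fe f 2))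
       (k $ fv f 0) (k $ fv f 1) (k $ fv f 2) (h $ fv f 0) (h $ fv f 1) (h $ fv f 2))"
  unfolding Bvec_diff_def inner_sum_left inner_scaleR_left inner_axis'
  by (simp add: sum_lessThan_3 face_hessian_def mult.commute numeral_2_eq_2)

lemma inner_Bvec_diff_commute:
  assumes "ideal_triangulation E F ep fv fe" and "w \<in> adm_set E ep l0"
  shows "Bvec_diff F ep fv fe l0 w h \<bullet> k = Bvec_diff F ep fv fe l0 w k \<bullet> h"
  unfolding inner_Bvec_diff
  by (intro sum.cong refl face_hessian_sym conf_cosh_face_gt_1[OF assms(1) _ _ assms(2)]) auto

lemma inner_Bvec_diff_self_nonpos:
  assumes "ideal_triangulation E F ep fv fe" and "w \<in> adm_set E ep l0"
  shows "Bvec_diff F ep fv fe l0 w h \<bullet> h \<le> 0"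
  unfolding inner_Bvec_diff
  by (intro sum_nonpos face_hessian_nonpos conf_cosh_face_gt_1[OF assms(1) _ _ assms(2)]) auto

theorem corollary2:
  fixes E :: "'e set" and F :: "'f set" and ep :: "'e \<Rightarrow> 'v::finite \<times> 'v"
    and fv :: "'f \<Rightarrow> nat \<Rightarrow> 'v" and fe :: "'f \<Rightarrow> nat \<Rightarrow> 'e" and l0 :: "'e \<Rightarrow> real"
  assumes tri: "ideal_triangulation E F ep fv fe"
    and l0_pos: "\<forall>e\<in>E. l0 e > 0"
  shows "(\<exists>\<Phi> :: real^'v \<Rightarrow> real.
            concave_on (adm_set E ep l0) \<Phi> \<and>
            (\<forall>w\<in>adm_set E ep l0.
               (\<Phi> has_derivative (\<lambda>h. Bvec F ep fv fe l0 w \<bullet> h)) (at w)))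
       \<and> (\<forall>(J :: real set) (wt :: real \<Rightarrow> real^'v).
            is_interval J \<and> 0 \<in> J \<and> wt 0 = 0 \<and>
            (\<forall>t\<in>J. wt t \<in> adm_set E ep l0 \<and>
                   (wt has_vector_derivative Bvec F ep fv fe l0 (wt t)) (at t within J))
            \<longrightarrow> (\<forall>s\<in>J. \<forall>t\<in>J. s \<le> t \<longrightarrow>
                   (\<Sum>i\<in>UNIV. (Bvec F ep fv fe l0 (wt t) $ i)^2)
                     \<le> (\<Sum>i\<in>UNIV. (Bvec F ep fv fe l0 (wt s) $ i)^2)))"
proof -
  let ?S = "adm_set E ep l0" and ?B = "Bvec F ep fv fe l0"
  have "finite E"
    using tri by (simp add: ideal_triangulation_def)
  note B' = has_derivative_Bvec[OF tri] and nsd = inner_Bvec_diff_self_nonpos[OF tri]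
  obtain \<Phi> where \<Phi>: "\<forall>w\<in>?S. (\<Phi> has_derivative (\<lambda>h. ?B w \<bullet> h)) (at w)"
    using symmetric_derivative_imp_gradient[OF open_adm_set[OF \<open>finite E\<close>] convex_adm_set
        one_mem_adm_set B' continuous_on_Bvec_diff[OF tri] inner_Bvec_diff_commute[OF tri]]
    by blast
  have "concave_on ?S \<Phi>"
    using \<Phi> nsd_derivative_imp_antimonotone[OF convex_adm_set B' nsd]
    by (intro antimonotone_gradient_imp_concave_on[OF convex_adm_set]) auto
  moreover have "(\<Sum>i\<in>UNIV. (?B (wt t) $ i)^2) \<le> (\<Sum>i\<in>UNIV. (?B (wt s) $ i)^2)"
    if "is_interval J" and "\<forall>t\<in>J. wt t \<in> ?S \<and> (wt has_vector_derivative ?B (wt t)) (at t within J)"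
      and "s \<in> J" "t \<in> J" "s \<le> t" for J wt s t
    using flow_of_nsd_field_inner_self_antimono[OF B' nsd that(1) _ that(3-5)] that(2)
    by (simp add: inner_vec_def power2_eq_square)
  ultimately show ?thesis
    using \<Phi> by blast
qed

end
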